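(* Let $P_k\ge 3$, let $w_k$ be an integer with $1<w_k<P_k$, let $\mu>0$, $\beta>0$, $s_k>0$, and let $\nu\in\mathbb{R}^{P_k}$ with $\nu_1\ge\nu_2\ge\dots\ge\nu_{P_k}$. Consider $$\min_{x\in\mathbb{R}^{P_k},\ x\ge 0,\ \|x\|_0\le w_k}\ \ -U_k\Big(\sum_{i=1}^{P_k}x_i\Big)+\frac{\mu}{2}\|x-\nu\|_2^2 .$$ Then there is a minimizer $x^\star$ of this problem satisfying $$x^\star_i=\max(0,\nu_i+\zeta)\ \ (i=1,\dots,w_k),\qquad x^\star_i=0\ \ (i>w_k),$$ where $\zeta>0$ satisfies $\sum_{i=1}^{w_k}\max(0,\nu_i+\zeta)>0$ and $\mu\zeta=U_k'\big(\sum_{i=1}^{w_k}\max(0,\nu_i+\zeta)\big)$. Moreover, with the convention $U_k'(0)=+\infty$: if there is a smallest index $i'\in\{2,\dots,w_k\}$ such that $\zeta_0:=-\nu_{i'}>0$ and $\mu\zeta_0\ge U_k'\big(\sum_{i=1}^{w_k}\max(0,\nu_i+\zeta_0)\big)$, then $\zeta$ is the largest real root of $$\mu\zeta\Big(\sum_{i=1}^{i'-1}(\nu_i+\zeta)\Big)^2=\beta\sum_{i=1}^{i'-1}(\nu_i+\zeta)+s_k ;$$ otherwise $\zeta$ is the largest real root of $$\mu\zeta\Big(\sum_{i=1}^{w_k}(\nu_i+\zeta)\Big)^2=\beta\sum_{i=1}^{w_k}(\nu_i+\zeta)+s_k .$$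
   Context: $U_k(u)=\beta\log u-\frac{s_k}{u}$ for $u>0$ (so $U_k'(u)=\frac{\beta}{u}+\frac{s_k}{u^2}$), and $-U_k(0)$ is taken to be $+\infty$, so that the objective equals $+\infty$ at $x=0$. $\|x\|_0$ denotes the number of nonzero entries of $x$. *)

theory Defs
  imports Complex_Main "HOL-Library.Extended_Real"
begin

definition U :: "real \<Rightarrow> real \<Rightarrow> real \<Rightarrow> real" where
  "U \<beta> s u = \<beta> * ln u - s / u"

definition U' :: "real \<Rightarrow> real \<Rightarrow> real \<Rightarrow> real" where
  "U' \<beta> s u = \<beta> / u + s / u ^ 2"

text \<open>Vectors in R^P are functions on the index set {1..P}. Objective
  -U(sum x_i) + mu/2 ||x - nu||^2, with value +infinity when the sum is 0
  (i.e. at x = 0 on the nonnegative orthant), convention -U(0) = +infinity.\<close>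
definition obj :: "real \<Rightarrow> real \<Rightarrow> real \<Rightarrow> nat \<Rightarrow> (nat \<Rightarrow> real) \<Rightarrow> (nat \<Rightarrow> real) \<Rightarrow> ereal" where
  "obj \<beta> s \<mu> P \<nu> x =
     (if (\<Sum>i=1..P. x i) \<le> 0 then \<infinity>
      else ereal (- U \<beta> s (\<Sum>i=1..P. x i) + \<mu> / 2 * (\<Sum>i=1..P. (x i - \<nu> i)\<^sup>2)))"

definition feasible :: "nat \<Rightarrow> nat \<Rightarrow> (nat \<Rightarrow> real) \<Rightarrow> bool" where
  "feasible P w x \<longleftrightarrow> (\<forall>i\<in>{1..P}. 0 \<le> x i) \<and> card {i\<in>{1..P}. x i \<noteq> 0} \<le> w"

definition is_minimizer :: "real \<Rightarrow> real \<Rightarrow> real \<Rightarrow> nat \<Rightarrow> nat \<Rightarrow> (nat \<Rightarrow> real) \<Rightarrow> (nat \<Rightarrow> real) \<Rightarrow> bool" where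
  "is_minimizer \<beta> s \<mu> P w \<nu> x \<longleftrightarrow>
     feasible P w x \<and> (\<forall>y. feasible P w y \<longrightarrow> obj \<beta> s \<mu> P \<nu> x \<le> obj \<beta> s \<mu> P \<nu> y)"

text \<open>Condition on index i' with the convention U'(0) = +infinity:
  zeta0 = -nu_i' > 0 and mu zeta0 \<ge> U'(sum_{i\<le>w} max(0, nu_i + zeta0)).\<close>
definition idx_cond :: "real \<Rightarrow> real \<Rightarrow> real \<Rightarrow> nat \<Rightarrow> (nat \<Rightarrow> real) \<Rightarrow> nat \<Rightarrow> bool" where
  "idx_cond \<beta> s \<mu> w \<nu> i' \<longleftrightarrow>
     (let z0 = - \<nu> i'; S = (\<Sum>i=1..w. max 0 (\<nu> i + z0)) in
      0 < z0 \<and> 0 < S \<and> U' \<beta> s S \<le> \<mu> * z0)"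

definition largest_root :: "real \<Rightarrow> real \<Rightarrow> real \<Rightarrow> nat \<Rightarrow> (nat \<Rightarrow> real) \<Rightarrow> real \<Rightarrow> bool" where
  "largest_root \<beta> s \<mu> m \<nu> \<zeta> \<longleftrightarrow>
     (let g = (\<lambda>z. \<mu> * z * (\<Sum>i=1..m. \<nu> i + z)\<^sup>2 - (\<beta> * (\<Sum>i=1..m. \<nu> i + z) + s)) in
      g \<zeta> = 0 \<and> (\<forall>z. g z = 0 \<longrightarrow> z \<le> \<zeta>))"

end

theory Submission
  imports Defs
begin

text \<open>Let \<open>h = pos_part_sum w \<nu>\<close>. The map \<open>\<zeta> \<mapsto> \<mu>\<zeta> - U'(h \<zeta>)\<close> is negative where
  \<open>h \<zeta>\<close> is small and positive for large \<open>\<zeta>\<close>, so some level \<open>\<zeta>\<close> satisfies \<open>\<mu>\<zeta> = U'(h \<zeta>)\<close>.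
  For that \<open>\<zeta>\<close> and any feasible \<open>y\<close>, concavity of \<open>U\<close> gives
  \<open>-U(\<Sum>y) \<ge> -U(h \<zeta>) - \<mu>\<zeta>(\<Sum>y - h \<zeta>)\<close>, while
  \<open>\<mu>/2 \<parallel>y - \<nu>\<parallel>\<^sup>2 - \<mu>\<zeta> \<Sum>y = \<mu>/2 \<parallel>y - (\<nu> + \<zeta>)\<parallel>\<^sup>2 + const\<close>. The candidate is the
  Euclidean projection of \<open>\<nu> + \<zeta>\<close> onto the nonnegative \<open>w\<close>-sparse vectors (keep the \<open>w\<close>
  largest entries, clipped at 0) and has sum \<open>h \<zeta>\<close>, so it minimises both parts at once.
  Since \<open>h\<close> increases and \<open>U'\<close> decreases, \<open>idx_cond i\<close> holds exactly when \<open>\<nu>\<^sub>i + \<zeta> \<le> 0\<close>,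
  so the least such index is where the positive parts stop; on the active indices the
  stationarity equation is the cubic, and beyond \<open>\<zeta>\<close> the left side \<open>\<mu>z\<close> outgrows
  \<open>U'\<close>, so \<open>\<zeta>\<close> is its largest root.\<close>

lemma U'_antimono:
  fixes \<beta> s a b :: real
  assumes "0 \<le> \<beta>" "0 \<le> s" "0 < a" "a \<le> b"
  shows "U' \<beta> s b \<le> U' \<beta> s a"
proof -
  have "\<beta> / b \<le> \<beta> / a" using assms by (simp add: divide_left_mono)
  moreover have "s / b^2 \<le> s / a^2"
    using assms by (simp add: divide_left_mono power_mono)
  ultimately show ?thesis unfolding U'_def by simp
qed

lemma U'_strict_antimono:
  fixes \<beta> s a b :: real
  assumes "0 < \<beta>" "0 \<le> s" "0 < a" "a < b"
  shows "U' \<beta> s b < U' \<beta> s a"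
proof -
  have "\<beta> / b < \<beta> / a" using assms by (simp add: divide_strict_left_mono)
  moreover have "s / b^2 \<le> s / a^2"
    using assms by (simp add: divide_left_mono power_mono)
  ultimately show ?thesis unfolding U'_def by simp
qed

lemma U'_pos:
  fixes \<beta> s u :: real
  assumes "0 < \<beta>" "0 \<le> s" "0 < u"
  shows "0 < U' \<beta> s u"
  using assms unfolding U'_def by (simp add: add_pos_nonneg)

lemma U'_le_of_ge_one:
  fixes \<beta> s u :: real
  assumes "0 \<le> \<beta>" "0 \<le> s" "1 \<le> u"
  shows "U' \<beta> s u \<le> \<beta> + s"
proof -
  have "\<beta> / u \<le> \<beta>" using assms mult_left_mono[of 1 u \<beta>] by (simp add: divide_le_eq)
  moreover have "s / u^2 \<le> s"
    using assms mult_left_mono[of 1 "u^2" s] one_le_power[of u 2] by (simp add: divide_le_eq)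
  ultimately show ?thesis unfolding U'_def by simp
qed

lemma U_le_tangent:
  fixes \<beta> s u v :: real
  assumes "0 \<le> \<beta>" "0 \<le> s" "0 < u" "0 < v"
  shows "U \<beta> s u \<le> U \<beta> s v + U' \<beta> s v * (u - v)"
proof -
  have "s/v - s/u - s*(u-v)/v^2 = - s*(u-v)^2/(u*v^2)"
    using assms by (simp add: field_simps power2_eq_square)
  also have "\<dots> \<le> 0" using assms by simp
  finally have reciprocal: "s/v - s/u \<le> s*(u-v)/v^2" by simp
  have "ln (u/v) \<le> u/v - 1" using assms by (simp add: ln_le_minus_one)
  hence "ln u \<le> ln v + (u - v)/v" using assms by (simp add: ln_div diff_divide_distrib)
  hence "\<beta> * ln u \<le> \<beta> * ln v + \<beta> * ((u - v)/v)"
    using assms(1) by (metis distrib_left mult_left_mono)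
  moreover have "(\<beta>/v + s/v^2)*(u-v) = \<beta>*((u-v)/v) + s*(u-v)/v^2"
    using assms by (simp add: field_simps)
  ultimately show ?thesis using reciprocal unfolding U_def U'_def by linarith
qed

lemma sum_le_sum_initial_segment:
  fixes b :: "nat \<Rightarrow> real"
  assumes "A \<subseteq> {1..P}" "card A \<le> w" "w \<le> P"
    and nonneg: "\<And>i. 0 \<le> b i"
    and antimono: "\<And>i j. 1 \<le> i \<Longrightarrow> i \<le> j \<Longrightarrow> j \<le> P \<Longrightarrow> b j \<le> b i"
  shows "sum b A \<le> sum b {1..w}"
proof -
  let ?W = "{1..w}"
  have fin: "finite A" using assms(1) finite_subset by blast
  have "card (A - ?W) \<le> card (?W - A)"
    using card_Int_Diff[OF fin, of ?W] card_Int_Diff[of ?W A] assms(2)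
    by (simp add: Int_commute)
  \<comment> \<open>every index outside \<open>{1..w}\<close> carries at most \<open>b w\<close>, every index inside at least \<open>b w\<close>\<close>
  have "sum b (A - ?W) \<le> sum (\<lambda>_. b w) (A - ?W)"
  proof (rule sum_mono)
    fix i assume i: "i \<in> A - ?W"
    hence "1 \<le> w" using assms(2) card_0_eq[OF fin] by fastforce
    thus "b i \<le> b w" using i assms(1) antimono by auto
  qed
  also have "\<dots> = card (A - ?W) * b w" by simp
  also have "\<dots> \<le> card (?W - A) * b w"
    using \<open>card (A - ?W) \<le> _\<close> nonneg by (simp add: mult_right_mono)
  also have "\<dots> = sum (\<lambda>_. b w) (?W - A)" by simp
  also have "\<dots> \<le> sum b (?W - A)"
    by (rule sum_mono) (use assms(3) antimono in auto)
  finally show ?thesis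
    using sum.Int_Diff[OF fin, of b ?W] sum.Int_Diff[of ?W b A] by (simp add: Int_commute)
qed

lemma sparse_nonneg_projection:
  fixes a y :: "nat \<Rightarrow> real"
  assumes "w \<le> P" "feasible P w y"
    and antimono: "\<And>i j. 1 \<le> i \<Longrightarrow> i \<le> j \<Longrightarrow> j \<le> P \<Longrightarrow> a j \<le> a i"
  shows "(\<Sum>i=1..P. ((if i \<le> w then max 0 (a i) else 0) - a i)^2) \<le> (\<Sum>i=1..P. (y i - a i)^2)"
proof -
  \<comment> \<open>with \<open>a\<^sup>2 = b + c\<close> split into squared positive and negative parts, the candidate loses
    \<open>c\<close> and saves \<open>b\<close> on \<open>{1..w}\<close>, whereas \<open>y\<close> saves at most \<open>b\<close> on its support\<close>
  define b where "b i = (max (a i) 0)^2" for i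
  define c where "c i = (min (a i) 0)^2" for i
  define A where "A = {i\<in>{1..P}. y i \<noteq> 0}"
  have y_nonneg: "\<And>i. i \<in> {1..P} \<Longrightarrow> 0 \<le> y i" and "card A \<le> w" and "A \<subseteq> {1..P}"
    using assms(2) unfolding feasible_def A_def by auto
  have split_sq: "(a i)^2 = b i + c i" for i
    unfolding b_def c_def by (cases "a i \<ge> 0") (auto simp: max_def min_def)
  have lhs: "((if i \<le> w then max 0 (a i) else 0) - a i)^2 = c i + b i - (if i \<le> w then b i else 0)" for i
    using split_sq[of i] unfolding b_def c_def by (cases "a i \<ge> 0") (auto simp: max_def min_def)
  have rhs: "c i + b i - (if i \<in> A then b i else 0) \<le> (y i - a i)^2" if "i \<in> {1..P}" for i
  proof (cases "i \<in> A")
    case False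
    hence "y i = 0" unfolding A_def using that by auto
    thus ?thesis using split_sq[of i] False by simp
  next
    case True
    have "a i < 0 \<Longrightarrow> (- a i)^2 \<le> (y i - a i)^2"
      using y_nonneg[OF that] by (intro power_mono) auto
    thus ?thesis using True unfolding c_def by (cases "a i \<ge> 0") (auto simp: min_def)
  qed
  have restrict: "(\<Sum>i=1..P. (if i \<in> B then b i else 0)) = sum b B" if "B \<subseteq> {1..P}" for B
    using that by (simp add: sum.If_cases Int_absorb1)
  have "sum b A \<le> sum b {1..w}"
  proof (rule sum_le_sum_initial_segment[of A P w])
    show "\<And>i j. 1 \<le> i \<Longrightarrow> i \<le> j \<Longrightarrow> j \<le> P \<Longrightarrow> b j \<le> b i"
      unfolding b_def using antimono by (intro power_mono) (auto simp: max_def, fastforce+)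
  qed (use assms(1) \<open>card A \<le> w\<close> \<open>A \<subseteq> {1..P}\<close> b_def in auto)
  hence "(\<Sum>i=1..P. (if i \<in> A then b i else 0)) \<le> (\<Sum>i=1..P. (if i \<in> {1..w} then b i else 0))"
    using restrict[OF \<open>A \<subseteq> {1..P}\<close>] restrict[of "{1..w}"] assms(1) by simp
  moreover have "(\<Sum>i=1..P. (if i \<le> w then b i else 0)) = (\<Sum>i=1..P. (if i \<in> {1..w} then b i else 0))"
    by (rule sum.cong) auto
  ultimately have "(\<Sum>i=1..P. ((if i \<le> w then max 0 (a i) else 0) - a i)^2)
      \<le> (\<Sum>i=1..P. c i + b i - (if i \<in> A then b i else 0))"
    by (simp add: lhs sum_subtractf)
  also have "\<dots> \<le> (\<Sum>i=1..P. (y i - a i)^2)"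
    by (rule sum_mono) (use rhs in auto)
  finally show ?thesis .
qed

lemma sum_power2_diff_shift:
  fixes f g :: "nat \<Rightarrow> real"
  shows "(\<Sum>i\<in>A. (f i - (g i + c))^2)
    = (\<Sum>i\<in>A. (f i - g i)^2) - 2 * c * (\<Sum>i\<in>A. f i) + (\<Sum>i\<in>A. 2 * c * g i + c^2)"
proof -
  have "(\<Sum>i\<in>A. (f i - (g i + c))^2) = (\<Sum>i\<in>A. ((f i - g i)^2 - 2 * c * f i) + (2 * c * g i + c^2))"
    by (rule sum.cong) (auto simp: power2_eq_square algebra_simps)
  thus ?thesis by (simp add: sum.distrib sum_subtractf sum_distrib_left)
qed

definition pos_part_sum :: "nat \<Rightarrow> (nat \<Rightarrow> real) \<Rightarrow> real \<Rightarrow> real" where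
  "pos_part_sum w \<nu> z = (\<Sum>i=1..w. max 0 (\<nu> i + z))"

lemma pos_part_sum_mono:
  "z \<le> z' \<Longrightarrow> pos_part_sum w \<nu> z \<le> pos_part_sum w \<nu> z'"
  unfolding pos_part_sum_def by (rule sum_mono) auto

lemma pos_part_sum_ge_first:
  assumes "1 \<le> w"
  shows "\<nu> 1 + z \<le> pos_part_sum w \<nu> z"
proof -
  have "max 0 (\<nu> 1 + z) \<le> pos_part_sum w \<nu> z"
    unfolding pos_part_sum_def by (rule member_le_sum) (use assms in auto)
  thus ?thesis by simp
qed

lemma pos_part_sum_le_first:
  assumes antimono: "\<And>i j. 1 \<le> i \<Longrightarrow> i \<le> j \<Longrightarrow> j \<le> w \<Longrightarrow> \<nu> j \<le> \<nu> i"
  shows "pos_part_sum w \<nu> z \<le> w * max 0 (\<nu> 1 + z)"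
proof -
  have "pos_part_sum w \<nu> z \<le> (\<Sum>i=1..w. max 0 (\<nu> 1 + z))"
  proof (unfold pos_part_sum_def, rule sum_mono)
    fix i assume "i \<in> {1..w}"
    thus "max 0 (\<nu> i + z) \<le> max 0 (\<nu> 1 + z)" using antimono[of 1 i] by (intro max.mono) auto
  qed
  thus ?thesis by simp
qed

lemma continuous_on_pos_part_sum: "continuous_on S (pos_part_sum w \<nu>)"
  unfolding pos_part_sum_def by (intro continuous_intros)

lemma pos_part_sum_eq_initial_sum:
  assumes "m \<le> w"
    and "\<And>i. i \<in> {1..m} \<Longrightarrow> 0 \<le> \<nu> i + z" and "\<And>i. i \<in> {m+1..w} \<Longrightarrow> \<nu> i + z \<le> 0"
  shows "pos_part_sum w \<nu> z = (\<Sum>i=1..m. \<nu> i + z)"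
proof -
  have "{1..w} = {1..m} \<union> {m+1..w}" using assms(1) by auto
  hence "pos_part_sum w \<nu> z = (\<Sum>i=1..m. max 0 (\<nu> i + z)) + (\<Sum>i=m+1..w. max 0 (\<nu> i + z))"
    unfolding pos_part_sum_def by (simp add: sum.union_disjoint)
  also have "(\<Sum>i=m+1..w. max 0 (\<nu> i + z)) = 0"
    using assms(3) by (intro sum.neutral) auto
  also have "(\<Sum>i=1..m. max 0 (\<nu> i + z)) = (\<Sum>i=1..m. \<nu> i + z)"
    using assms(2) by (intro sum.cong) auto
  finally show ?thesis by simp
qed

lemma stationary_level_lower_bracket:
  fixes \<mu> \<beta> s :: real and \<nu> :: "nat \<Rightarrow> real"
  assumes "0 < \<mu>" "0 < \<beta>" "0 \<le> s" "1 \<le> w"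
    and antimono: "\<And>i j. 1 \<le> i \<Longrightarrow> i \<le> j \<Longrightarrow> j \<le> w \<Longrightarrow> \<nu> j \<le> \<nu> i"
  shows "\<exists>z. 0 < pos_part_sum w \<nu> z \<and> \<mu> * z \<le> U' \<beta> s (pos_part_sum w \<nu> z)"
proof -
  define M where "M = 1 + \<bar>\<nu> 1\<bar>"
  define \<epsilon> where "\<epsilon> = min 1 (\<beta> / (real w * \<mu> * M))"
  define z where "z = - \<nu> 1 + \<epsilon>"
  have "0 < M" "0 < real w" using assms(4) unfolding M_def by auto
  hence "0 < \<epsilon>" "\<epsilon> \<le> 1" "\<epsilon> * (real w * \<mu> * M) \<le> \<beta>"
    using assms(1,2) unfolding \<epsilon>_def by (auto simp: min_def field_simps)
  have pos: "0 < pos_part_sum w \<nu> z"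
    using pos_part_sum_ge_first[OF assms(4), where \<nu>=\<nu> and z=z] \<open>0 < \<epsilon>\<close> unfolding z_def by simp
  have "pos_part_sum w \<nu> z \<le> real w * max 0 (\<nu> 1 + z)"
    using antimono by (rule pos_part_sum_le_first)
  also have "\<dots> = real w * \<epsilon>" using \<open>0 < \<epsilon>\<close> unfolding z_def by simp
  finally have "pos_part_sum w \<nu> z \<le> real w * \<epsilon>" .
  \<comment> \<open>\<open>h z \<le> w \<epsilon>\<close> is small, so \<open>U'(h z) \<ge> \<beta>/(w \<epsilon>) \<ge> \<mu> M \<ge> \<mu> z\<close>\<close>
  hence "U' \<beta> s (real w * \<epsilon>) \<le> U' \<beta> s (pos_part_sum w \<nu> z)"
    using U'_antimono pos assms by simp
  moreover have "\<beta> / (real w * \<epsilon>) \<le> U' \<beta> s (real w * \<epsilon>)" unfolding U'_def using assms(3) by simp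
  moreover have "\<mu> * M \<le> \<beta> / (real w * \<epsilon>)"
    using \<open>\<epsilon> * (real w * \<mu> * M) \<le> \<beta>\<close> \<open>0 < \<epsilon>\<close> \<open>0 < real w\<close> by (simp add: field_simps)
  moreover have "\<mu> * z \<le> \<mu> * M"
    using assms(1) \<open>\<epsilon> \<le> 1\<close> unfolding z_def M_def by simp
  ultimately show ?thesis using pos by force
qed

lemma stationary_level_upper_bracket:
  fixes \<mu> \<beta> s :: real
  assumes "0 < \<mu>" "0 \<le> \<beta>" "0 \<le> s" "1 \<le> w"
  shows "\<exists>z\<ge>z\<^sub>0. U' \<beta> s (pos_part_sum w \<nu> z) \<le> \<mu> * z"
proof -
  define R where "R = max (max 1 (2 * \<bar>\<nu> 1\<bar>)) (2 * (\<beta> + s) / \<mu>)"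
  define z where "z = max z\<^sub>0 (- \<nu> 1 + R)"
  have "1 \<le> R" unfolding R_def by simp
  have "R \<le> pos_part_sum w \<nu> z"
    using pos_part_sum_ge_first[OF assms(4), where \<nu>=\<nu> and z=z] unfolding z_def by simp
  hence "U' \<beta> s (pos_part_sum w \<nu> z) \<le> U' \<beta> s R"
    using U'_antimono[of \<beta> s R] \<open>1 \<le> R\<close> assms by simp
  also have "\<dots> \<le> \<beta> + s" using U'_le_of_ge_one \<open>1 \<le> R\<close> assms by simp
  also have "\<beta> + s \<le> \<mu> * (R / 2)"
  proof -
    have "2 * (\<beta> + s) / \<mu> \<le> R" unfolding R_def by simp
    thus ?thesis using assms(1) by (simp add: field_simps)
  qed
  also have "\<dots> \<le> \<mu> * z"
  proof -
    have "2 * \<bar>\<nu> 1\<bar> \<le> R" unfolding R_def by simp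
    hence "R / 2 \<le> z" unfolding z_def by linarith
    thus ?thesis using assms(1) by simp
  qed
  finally show ?thesis by (intro exI[of _ z]) (simp add: z_def)
qed

lemma stationary_level_exists:
  fixes \<mu> \<beta> s :: real
  assumes "0 < \<mu>" "0 < \<beta>" "0 \<le> s" "1 \<le> w"
    and antimono: "\<And>i j. 1 \<le> i \<Longrightarrow> i \<le> j \<Longrightarrow> j \<le> w \<Longrightarrow> \<nu> j \<le> \<nu> i"
  shows "\<exists>\<zeta>. 0 < pos_part_sum w \<nu> \<zeta> \<and> \<mu> * \<zeta> = U' \<beta> s (pos_part_sum w \<nu> \<zeta>)"
proof -
  let ?h = "pos_part_sum w \<nu>"
  define \<phi> where "\<phi> z = \<mu> * z - U' \<beta> s (?h z)" for z
  obtain z\<^sub>1 where pos: "0 < ?h z\<^sub>1" and "\<phi> z\<^sub>1 \<le> 0"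
    using stationary_level_lower_bracket[of \<mu> \<beta> s w \<nu>] assms unfolding \<phi>_def by auto
  obtain z\<^sub>2 where "z\<^sub>1 \<le> z\<^sub>2" and "0 \<le> \<phi> z\<^sub>2"
    using stationary_level_upper_bracket[of \<mu> \<beta> s w z\<^sub>1 \<nu>] assms unfolding \<phi>_def by auto
  have pos_between: "0 < ?h z" if "z\<^sub>1 \<le> z" for z
    using pos pos_part_sum_mono[OF that, of w \<nu>] by simp
  have "continuous_on {z\<^sub>1..z\<^sub>2} \<phi>"
    unfolding \<phi>_def U'_def using pos_between
    by (intro continuous_intros continuous_on_pos_part_sum) force+
  then obtain \<zeta> where "z\<^sub>1 \<le> \<zeta>" "\<phi> \<zeta> = 0"
    using IVT'[of \<phi> z\<^sub>1 0 z\<^sub>2] \<open>\<phi> z\<^sub>1 \<le> 0\<close> \<open>0 \<le> \<phi> z\<^sub>2\<close> \<open>z\<^sub>1 \<le> z\<^sub>2\<close> by auto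
  thus ?thesis using pos_between unfolding \<phi>_def by auto
qed

lemma is_minimizer_at_stationary_level:
  fixes \<mu> \<beta> s \<zeta> :: real and \<nu> :: "nat \<Rightarrow> real"
  assumes "w \<le> P" "0 < \<mu>" "0 \<le> \<beta>" "0 \<le> s"
    and antimono: "\<And>i j. 1 \<le> i \<Longrightarrow> i \<le> j \<Longrightarrow> j \<le> P \<Longrightarrow> \<nu> j \<le> \<nu> i"
    and pos: "0 < pos_part_sum w \<nu> \<zeta>"
    and stationary: "\<mu> * \<zeta> = U' \<beta> s (pos_part_sum w \<nu> \<zeta>)"
  shows "is_minimizer \<beta> s \<mu> P w \<nu> (\<lambda>i. if i \<le> w then max 0 (\<nu> i + \<zeta>) else 0)"
proof -
  define x where "x = (\<lambda>i. if i \<le> w then max 0 (\<nu> i + \<zeta>) else (0::real))"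
  let ?h = "pos_part_sum w \<nu> \<zeta>"
  let ?D = "\<lambda>y. \<Sum>i=1..P. (y i - \<nu> i)^2"
  have "(\<Sum>i=1..P. x i) = (\<Sum>i\<in>{i\<in>{1..P}. i \<le> w}. max 0 (\<nu> i + \<zeta>))"
    unfolding x_def by (rule sum.inter_filter[symmetric]) simp
  also have "{i\<in>{1..P}. i \<le> w} = {1..w}" using assms(1) by auto
  finally have sum_x: "(\<Sum>i=1..P. x i) = ?h" unfolding pos_part_sum_def .
  have "card {i\<in>{1..P}. x i \<noteq> 0} \<le> card {1..w}"
    by (rule card_mono) (auto simp: x_def)
  hence feasible_x: "feasible P w x" unfolding feasible_def x_def by auto
  have "obj \<beta> s \<mu> P \<nu> x \<le> obj \<beta> s \<mu> P \<nu> y" if feasible_y: "feasible P w y" for y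
  proof (cases "(\<Sum>i=1..P. y i) \<le> 0")
    case True
    thus ?thesis unfolding obj_def by simp
  next
    case False
    define S where "S = (\<Sum>i=1..P. y i)"
    have tangent: "- U \<beta> s ?h - \<mu> * \<zeta> * (S - ?h) \<le> - U \<beta> s S"
      using U_le_tangent[of \<beta> s S ?h] assms(3,4) pos stationary False unfolding S_def by simp
    have "(\<Sum>i=1..P. (x i - (\<nu> i + \<zeta>))^2) \<le> (\<Sum>i=1..P. (y i - (\<nu> i + \<zeta>))^2)"
      unfolding x_def
      using sparse_nonneg_projection[OF assms(1) feasible_y, of "\<lambda>i. \<nu> i + \<zeta>"] antimono by simp
    hence "?D x - 2 * \<zeta> * ?h \<le> ?D y - 2 * \<zeta> * S"
      using sum_power2_diff_shift[of x \<nu> \<zeta>] sum_power2_diff_shift[of y \<nu> \<zeta>] sum_x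
      unfolding S_def by simp
    hence "\<mu> / 2 * ?D x - \<mu> * \<zeta> * ?h \<le> \<mu> / 2 * ?D y - \<mu> * \<zeta> * S"
      using mult_left_mono[of _ _ "\<mu> / 2"] assms(2) by (fastforce simp: algebra_simps)
    hence "- U \<beta> s ?h + \<mu> / 2 * ?D x \<le> - U \<beta> s S + \<mu> / 2 * ?D y"
      using tangent by (simp add: algebra_simps)
    thus ?thesis unfolding obj_def using sum_x pos False S_def by simp
  qed
  thus ?thesis using feasible_x unfolding is_minimizer_def x_def by blast
qed

lemma idx_cond_iff_inactive:
  fixes \<mu> \<beta> s \<zeta> :: real and \<nu> :: "nat \<Rightarrow> real"
  assumes "0 < \<mu>" "0 \<le> \<beta>" "0 \<le> s" "0 < \<zeta>"
    and pos: "0 < pos_part_sum w \<nu> \<zeta>"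
    and stationary: "\<mu> * \<zeta> = U' \<beta> s (pos_part_sum w \<nu> \<zeta>)"
  shows "idx_cond \<beta> s \<mu> w \<nu> i \<longleftrightarrow> \<nu> i + \<zeta> \<le> 0"
proof
  assume "idx_cond \<beta> s \<mu> w \<nu> i"
  hence cond: "0 < pos_part_sum w \<nu> (- \<nu> i)" "U' \<beta> s (pos_part_sum w \<nu> (- \<nu> i)) \<le> \<mu> * (- \<nu> i)"
    unfolding idx_cond_def Let_def pos_part_sum_def by auto
  show "\<nu> i + \<zeta> \<le> 0"
  proof (rule ccontr)
    assume "\<not> \<nu> i + \<zeta> \<le> 0"
    hence "- \<nu> i < \<zeta>" by simp
    hence "U' \<beta> s (pos_part_sum w \<nu> \<zeta>) \<le> U' \<beta> s (pos_part_sum w \<nu> (- \<nu> i))"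
      using U'_antimono pos_part_sum_mono cond(1) assms(2,3) by (simp add: less_imp_le)
    moreover have "\<mu> * (- \<nu> i) < \<mu> * \<zeta>" using \<open>- \<nu> i < \<zeta>\<close> assms(1) by (rule mult_strict_left_mono)
    ultimately show False using cond(2) stationary by simp
  qed
next
  assume "\<nu> i + \<zeta> \<le> 0"
  hence le: "pos_part_sum w \<nu> \<zeta> \<le> pos_part_sum w \<nu> (- \<nu> i)"
    by (intro pos_part_sum_mono) simp
  hence "U' \<beta> s (pos_part_sum w \<nu> (- \<nu> i)) \<le> \<mu> * \<zeta>"
    using U'_antimono pos assms(2,3) stationary by simp
  also have "\<mu> * \<zeta> \<le> \<mu> * (- \<nu> i)"
    using \<open>\<nu> i + \<zeta> \<le> 0\<close> assms(1) by (intro mult_left_mono) auto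
  finally show "idx_cond \<beta> s \<mu> w \<nu> i"
    using le pos assms(4) \<open>\<nu> i + \<zeta> \<le> 0\<close>
    unfolding idx_cond_def Let_def pos_part_sum_def by auto
qed

lemma largest_root_of_stationary:
  fixes \<mu> \<beta> s \<zeta> :: real and \<nu> :: "nat \<Rightarrow> real"
  assumes "0 < \<mu>" "0 < \<beta>" "0 \<le> s" "1 \<le> m"
    and pos: "0 < (\<Sum>i=1..m. \<nu> i + \<zeta>)"
    and stationary: "\<mu> * \<zeta> = U' \<beta> s (\<Sum>i=1..m. \<nu> i + \<zeta>)"
  shows "largest_root \<beta> s \<mu> m \<nu> \<zeta>"
proof -
  define T where "T z = (\<Sum>i=1..m. \<nu> i + z)" for z
  have root: "\<mu> * \<zeta> * (T \<zeta>)^2 - (\<beta> * T \<zeta> + s) = 0"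
    using stationary pos unfolding T_def U'_def by (simp add: field_simps power2_eq_square)
  have no_larger_root: "\<mu> * z * (T z)^2 - (\<beta> * T z + s) \<noteq> 0" if "\<zeta> < z" for z
  proof -
    have "T \<zeta> < T z" unfolding T_def
      by (rule sum_strict_mono) (use that assms(4) in auto)
    hence "0 < T z" "U' \<beta> s (T z) < \<mu> * z"
      using pos U'_strict_antimono[of \<beta> s "T \<zeta>" "T z"] stationary assms(2,3)
        mult_strict_left_mono[OF that assms(1)]
      unfolding T_def by auto
    hence "\<beta> * T z + s < \<mu> * z * (T z)^2"
      unfolding U'_def by (simp add: field_simps power2_eq_square)
    thus ?thesis by simp
  qed
  show ?thesis unfolding largest_root_def Let_def
    using root no_larger_root unfolding T_def by (meson not_le)
qed

lemma largest_root_at_stationary_level: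
  fixes \<mu> \<beta> s \<zeta> :: real and \<nu> :: "nat \<Rightarrow> real"
  assumes "0 < \<mu>" "0 < \<beta>" "0 \<le> s" "0 < \<zeta>" "1 \<le> w"
    and antimono: "\<And>i j. 1 \<le> i \<Longrightarrow> i \<le> j \<Longrightarrow> j \<le> w \<Longrightarrow> \<nu> j \<le> \<nu> i"
    and pos: "0 < pos_part_sum w \<nu> \<zeta>"
    and stationary: "\<mu> * \<zeta> = U' \<beta> s (pos_part_sum w \<nu> \<zeta>)"
  shows "if \<exists>i'\<in>{2..w}. idx_cond \<beta> s \<mu> w \<nu> i'
    then largest_root \<beta> s \<mu> ((LEAST i'. i' \<in> {2..w} \<and> idx_cond \<beta> s \<mu> w \<nu> i') - 1) \<nu> \<zeta>
    else largest_root \<beta> s \<mu> w \<nu> \<zeta>"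
proof -
  have inactive_iff: "idx_cond \<beta> s \<mu> w \<nu> i \<longleftrightarrow> \<nu> i + \<zeta> \<le> 0" for i
    using idx_cond_iff_inactive[of \<mu> \<beta> s \<zeta> w \<nu>] assms(1-4) pos stationary by simp
  have "0 < real w * max 0 (\<nu> 1 + \<zeta>)"
    using pos pos_part_sum_le_first[of w \<nu> \<zeta>] antimono by fastforce
  hence first_active: "0 < \<nu> 1 + \<zeta>" by (simp add: zero_less_mult_iff max_def split: if_splits)
  have root: "largest_root \<beta> s \<mu> m \<nu> \<zeta>"
    if "1 \<le> m" "m \<le> w" "\<And>i. i \<in> {2..m} \<Longrightarrow> \<not> idx_cond \<beta> s \<mu> w \<nu> i"
      and "\<And>i. i \<in> {m+1..w} \<Longrightarrow> \<nu> i + \<zeta> \<le> 0" for m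
  proof -
    have "0 \<le> \<nu> i + \<zeta>" if "i \<in> {1..m}" for i
      using that first_active \<open>\<And>i. i \<in> {2..m} \<Longrightarrow> _\<close>[of i] inactive_iff[of i]
      by (cases "i = 1") auto
    hence "pos_part_sum w \<nu> \<zeta> = (\<Sum>i=1..m. \<nu> i + \<zeta>)"
      using pos_part_sum_eq_initial_sum that(2,4) by blast
    thus ?thesis
      using largest_root_of_stationary[of \<mu> \<beta> s m \<nu> \<zeta>] assms(1-3) that(1) pos stationary by simp
  qed
  show ?thesis
  proof (cases "\<exists>i'\<in>{2..w}. idx_cond \<beta> s \<mu> w \<nu> i'")
    case True
    define L where "L = (LEAST i'. i' \<in> {2..w} \<and> idx_cond \<beta> s \<mu> w \<nu> i')"
    have "L \<in> {2..w} \<and> idx_cond \<beta> s \<mu> w \<nu> L"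
      unfolding L_def by (rule LeastI_ex) (use True in blast)
    hence L: "L \<in> {2..w}" "idx_cond \<beta> s \<mu> w \<nu> L" by auto
    have before_L: "\<not> idx_cond \<beta> s \<mu> w \<nu> i" if "i \<in> {2..L - 1}" for i
    proof -
      have "i < L" using that L(1) by auto
      thus ?thesis
        using not_less_Least[of i "\<lambda>i'. i' \<in> {2..w} \<and> idx_cond \<beta> s \<mu> w \<nu> i'"] that L(1)
        unfolding L_def[symmetric] by auto
    qed
    have "\<nu> i + \<zeta> \<le> 0" if "i \<in> {L - 1 + 1..w}" for i
      using antimono[of L i] that L inactive_iff by auto
    hence "largest_root \<beta> s \<mu> (L - 1) \<nu> \<zeta>"
      using root[of "L - 1"] before_L L(1) by auto
    thus ?thesis using True unfolding L_def by simp
  next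
    case False
    thus ?thesis using root[of w] assms(5) by auto
  qed
qed

theorem lemma3:
  fixes P w :: nat and \<mu> \<beta> s :: real and \<nu> :: "nat \<Rightarrow> real"
  assumes "P \<ge> 3" and "1 < w" and "w < P"
    and "\<mu> > 0" and "\<beta> > 0" and "s > 0"
    and "\<And>i j. 1 \<le> i \<Longrightarrow> i \<le> j \<Longrightarrow> j \<le> P \<Longrightarrow> \<nu> j \<le> \<nu> i"
  shows "\<exists>\<zeta>>0.
     (\<Sum>i=1..w. max 0 (\<nu> i + \<zeta>)) > 0 \<and>
     \<mu> * \<zeta> = U' \<beta> s (\<Sum>i=1..w. max 0 (\<nu> i + \<zeta>)) \<and>
     is_minimizer \<beta> s \<mu> P w \<nu> (\<lambda>i. if i \<le> w then max 0 (\<nu> i + \<zeta>) else 0) \<and>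
     (if \<exists>i'\<in>{2..w}. idx_cond \<beta> s \<mu> w \<nu> i'
      then largest_root \<beta> s \<mu> ((LEAST i'. i' \<in> {2..w} \<and> idx_cond \<beta> s \<mu> w \<nu> i') - 1) \<nu> \<zeta>
      else largest_root \<beta> s \<mu> w \<nu> \<zeta>)"
proof -
  have antimono_w: "\<And>i j. 1 \<le> i \<Longrightarrow> i \<le> j \<Longrightarrow> j \<le> w \<Longrightarrow> \<nu> j \<le> \<nu> i"
    using assms(3,7) by simp
  obtain \<zeta> where pos: "0 < pos_part_sum w \<nu> \<zeta>"
    and stationary: "\<mu> * \<zeta> = U' \<beta> s (pos_part_sum w \<nu> \<zeta>)"
    using stationary_level_exists[of \<mu> \<beta> s w \<nu>] assms(2,4-6) antimono_w by force
  have "0 < \<mu> * \<zeta>"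
    using stationary U'_pos[OF assms(5) less_imp_le[OF assms(6)] pos] by simp
  hence "0 < \<zeta>" using assms(4) by (simp add: zero_less_mult_iff)
  moreover have "is_minimizer \<beta> s \<mu> P w \<nu> (\<lambda>i. if i \<le> w then max 0 (\<nu> i + \<zeta>) else 0)"
    using is_minimizer_at_stationary_level[of w P \<mu> \<beta> s \<nu> \<zeta>] assms(3-7) pos stationary by simp
  moreover have "if \<exists>i'\<in>{2..w}. idx_cond \<beta> s \<mu> w \<nu> i'
    then largest_root \<beta> s \<mu> ((LEAST i'. i' \<in> {2..w} \<and> idx_cond \<beta> s \<mu> w \<nu> i') - 1) \<nu> \<zeta>
    else largest_root \<beta> s \<mu> w \<nu> \<zeta>"
    using \<open>0 < \<zeta>\<close> assms(2,4-6) antimono_w pos stationary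
    by (intro largest_root_at_stationary_level) auto
  ultimately show ?thesis using pos stationary unfolding pos_part_sum_def by blast
qed

end
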